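(* Let $\mathbb{K}\in\{\mathbb{R},\mathbb{C}\}$, $d,m,n\ge1$ with $(m,n)\ne(1,1)$ and $d(\mathbb{K})mn\ge4$. Then $\mathrm{Q}^{d,m}_n(\mathbb{K})$ is simply connected.
   Context: $d(\mathbb{K})=\dim_\mathbb{R}\mathbb{K}$. $\mathrm{Q}^{d,m}_n(\mathbb{K})$ is the space of $m$-tuples $(f_1,\dots,f_m)$ of monic degree-$d$ polynomials with coefficients in $\mathbb{K}$ having no common real root of multiplicity $\ge n$ (common non-real roots of any multiplicity allowed), topologized as a subspace of $\mathbb{K}^{dm}$ via coefficients. *)

theory Defs
  imports "HOL-Analysis.Analysis" "HOL-Computational_Algebra.Polynomial"
begin

text \<open>A point of the coefficient space is \<open>c :: nat \<Rightarrow> nat \<Rightarrow> 'k\<close>, where \<open>c i j\<close>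
  (for \<open>i < m\<close>, \<open>j < d\<close>) is the coefficient of \<open>x^j\<close> in the \<open>i\<close>-th polynomial;
  all other entries are zero. This set carries the product topology, which on this
  subset is the Euclidean topology of \<open>K^(dm)\<close>.\<close>

definition monic_poly_of :: "nat \<Rightarrow> (nat \<Rightarrow> 'k::comm_ring_1) \<Rightarrow> 'k poly" where
  "monic_poly_of d a = monom 1 d + (\<Sum>j<d. monom (a j) j)"

definition Qspace :: "nat \<Rightarrow> nat \<Rightarrow> nat \<Rightarrow> (nat \<Rightarrow> nat \<Rightarrow> 'k::real_normed_field) set" where
  "Qspace d m n = {c. (\<forall>i j. (m \<le> i \<or> d \<le> j) \<longrightarrow> c i j = 0) \<and>
      \<not> (\<exists>x::real. \<forall>i<m. n \<le> order (of_real x) (monic_poly_of d (c i)))}"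

end

theory Submission
  imports Defs
begin

text \<open>A tuple has a common real root \<open>x\<close> of multiplicity \<open>\<ge> n\<close> iff all remainders modulo \<open>(X - x)^n\<close>
  vanish: \<open>m n\<close> conditions, affine in the coefficients, in which the coefficients of degree \<open>< n\<close>
  appear with coefficient \<open>1\<close>. If \<open>n > d\<close> they never hold, so the space is all of \<open>\<bbbK>^(dm)\<close>.
  Otherwise, adding a small generic perturbation \<open>r\<close> to these low coefficients removes every common
  real root from a smooth two-parameter family, since the bad values of \<open>r\<close> are the image of a
  smooth map on a three-dimensional space, hence null when \<open>d(\<bbbK>) m n \<ge> 4\<close>. Together with a
  uniform neighbourhood of any compact family inside the space, this deforms straight segments
  and cones over (polynomially approximated) loops into the space: it is path connected and
  every loop is null-homotopic.\<close>

section \<open>Remainders modulo powers of a linear polynomial\<close>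

lemma pcompose_monom: "pcompose (monom c j) q = smult c (q ^ j)"
proof -
  have "pcompose ([:0, 1:] ^ j) q = q ^ j" for q :: "'a poly"
    by (induct j) (simp_all add: pcompose_mult pcompose_pCons pcompose_1)
  then show ?thesis
    by (simp add: monom_altdef pcompose_smult)
qed

lemma poly_eq_low_monoms_plus_shift:
  fixes g :: "'a::comm_semiring_1 poly"
  shows "g = (\<Sum>l<n. monom (coeff g l) l) + monom 1 n * poly_shift n g"
proof (rule poly_eqI)
  show "coeff g k = coeff ((\<Sum>l<n. monom (coeff g l) l) + monom 1 n * poly_shift n g) k" for k
    by (cases "k < n") (simp_all add: coeff_sum coeff_monom_mult coeff_poly_shift coeff_monom)
qed

lemma poly_mod_sum_left:
  fixes g :: "'a::field poly"
  shows "(\<Sum>j\<in>A. f j) mod g = (\<Sum>j\<in>A. f j mod g)"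
  by (induct A rule: infinite_finite_induct) (simp_all add: poly_mod_add_left)

lemma mod_linear_power_eq_taylor:
  fixes f :: "'a::field poly"
  shows "f mod [:-a, 1:] ^ n = (\<Sum>l<n. smult (coeff (pcompose f [:a, 1:]) l) ([:-a, 1:] ^ l))"
    (is "_ = ?t")
proof -
  define g where "g = pcompose f [:a, 1:]"
  have f: "f = pcompose g [:-a, 1:]"
    by (simp add: g_def pcompose_assoc[symmetric] pcompose_pCons)
  have t: "?t = pcompose (\<Sum>l<n. monom (coeff g l) l) [:-a, 1:]"
    by (simp add: g_def pcompose_sum pcompose_monom)
  have "f - ?t = pcompose (monom 1 n * poly_shift n g) [:-a, 1:]"
    by (subst f, subst poly_eq_low_monoms_plus_shift[of g n]) (simp add: t pcompose_add)
  also have "\<dots> = [:-a, 1:] ^ n * pcompose (poly_shift n g) [:-a, 1:]"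
    by (simp add: pcompose_mult pcompose_monom)
  finally have "(f - ?t) mod [:-a, 1:] ^ n = 0"
    by simp
  moreover have "?t mod [:-a, 1:] ^ n = ?t"
  proof (cases "n = 0")
    case False
    have "degree ?t \<le> n - 1"
      by (intro degree_sum_le order.trans[OF degree_smult_le]) (auto simp: degree_linear_power)
    with False show ?thesis
      by (intro mod_poly_less) (simp add: degree_linear_power)
  qed simp
  ultimately show ?thesis
    by (simp add: poly_mod_diff_left)
qed

lemma le_order_iff_coeff_mod_eq_0:
  fixes f :: "'a::field poly"
  assumes "f \<noteq> 0"
  shows "n \<le> order a f \<longleftrightarrow> (\<forall>k<n. coeff (f mod [:-a, 1:] ^ n) k = 0)"
proof -
  have "n \<le> order a f \<longleftrightarrow> f mod [:-a, 1:] ^ n = 0"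
    using order_divides[of a n f] assms by (simp add: dvd_eq_mod_eq_0)
  also have "\<dots> \<longleftrightarrow> (\<forall>k<n. coeff (f mod [:-a, 1:] ^ n) k = 0)"
  proof
    assume "\<forall>k<n. coeff (f mod [:-a, 1:] ^ n) k = 0"
    moreover have "f mod [:-a, 1:] ^ n = 0 \<or> degree (f mod [:-a, 1:] ^ n) < n"
      using degree_mod_less[of "[:-a, 1:] ^ n" f] by (simp add: degree_linear_power)
    ultimately show "f mod [:-a, 1:] ^ n = 0"
      by (metis leading_coeff_0_iff)
  qed simp
  finally show ?thesis .
qed

lemma coeff_linear_power_differentiable:
  fixes c :: "real \<Rightarrow> 'k::real_normed_field"
  assumes "c differentiable (at x0)"
  shows "(\<lambda>x. coeff ([:c x, 1:] ^ j) l) differentiable (at x0)"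
proof (cases "l \<le> j")
  case True
  then show ?thesis
    using assms by (simp add: coeff_linear_poly_power differentiable_mult differentiable_power)
next
  case False
  then show ?thesis
    by (simp add: coeff_eq_0 degree_linear_power)
qed

section \<open>Jets of tuples of monic polynomials\<close>

definition coeff_space :: "nat \<Rightarrow> nat \<Rightarrow> (nat \<Rightarrow> nat \<Rightarrow> 'k::zero) set" where
  "coeff_space d m = {c. \<forall>i j. (m \<le> i \<or> d \<le> j) \<longrightarrow> c i j = 0}"

definition common_real_root ::
    "nat \<Rightarrow> nat \<Rightarrow> nat \<Rightarrow> (nat \<Rightarrow> nat \<Rightarrow> 'k::real_normed_field) \<Rightarrow> real \<Rightarrow> bool" where
  "common_real_root d m n c x \<longleftrightarrow> (\<forall>i<m. n \<le> order (of_real x) (monic_poly_of d (c i)))"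

text \<open>The remainder modulo \<open>(X - x)^n\<close> encodes the \<open>(n-1)\<close>-jet at \<open>x\<close>: \<open>jet d n c x i\<close> lists
  its coefficients for the \<open>i\<close>-th polynomial, and \<open>jet_basis n j\<close> those of \<open>X^j\<close>.\<close>

definition jet_basis :: "nat \<Rightarrow> nat \<Rightarrow> nat \<Rightarrow> real \<Rightarrow> 'k::real_normed_field" where
  "jet_basis n j k x = coeff (monom 1 j mod [:- of_real x, 1:] ^ n) k"

definition jet ::
    "nat \<Rightarrow> nat \<Rightarrow> (nat \<Rightarrow> nat \<Rightarrow> 'k::real_normed_field) \<Rightarrow> real \<Rightarrow> nat \<Rightarrow> nat \<Rightarrow> 'k" where
  "jet d n c x i k = coeff (monic_poly_of d (c i) mod [:- of_real x, 1:] ^ n) k"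

lemma Qspace_eq: "Qspace d m n = {c \<in> coeff_space d m. \<forall>x. \<not> common_real_root d m n c x}"
  by (auto simp: Qspace_def coeff_space_def common_real_root_def)

lemma jet_basis_differentiable: "(\<lambda>x. jet_basis n j k x :: 'k::real_normed_field) differentiable (at x0)"
proof -
  have "(\<lambda>x. of_real x :: 'k) differentiable (at x0)" "(\<lambda>x. - of_real x :: 'k) differentiable (at x0)"
    by (simp_all add: bounded_linear_imp_differentiable bounded_linear_of_real differentiable_minus)
  note this[THEN coeff_linear_power_differentiable]
  then have "(\<lambda>x. \<Sum>l<n. coeff ([:of_real x, 1:] ^ j) l * coeff ([:- of_real x, 1:] ^ l) k :: 'k)
      differentiable (at x0)"
    by (intro differentiable_sum differentiable_mult) auto
  then show ?thesis
    by (simp add: jet_basis_def mod_linear_power_eq_taylor pcompose_monom coeff_sum)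
qed

lemma jet_basis_low: "j < n \<Longrightarrow> jet_basis n j k x = (if k = j then 1 else 0)"
  by (simp add: jet_basis_def mod_poly_less degree_linear_power degree_monom_eq coeff_monom)

lemma jet_eq_sum: "jet d n c x i k = jet_basis n d k x + (\<Sum>j<d. c i j * jet_basis n j k x)"
proof -
  have "monom (c i j) j = smult (c i j) (monom 1 j)" for j
    by (simp add: smult_monom)
  then show ?thesis
    by (simp only: jet_def jet_basis_def monic_poly_of_def poly_mod_add_left poly_mod_sum_left
        coeff_add coeff_sum mod_smult_left coeff_smult)
qed

lemma monic_poly_of_nonzero: "monic_poly_of d a \<noteq> (0::'k::comm_ring_1 poly)"
proof -
  have "coeff (monic_poly_of d a) d = 1"
    by (simp add: monic_poly_of_def coeff_sum)
  then show ?thesis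
    by auto
qed

lemma common_real_root_iff_jet_eq_0:
  fixes c :: "nat \<Rightarrow> nat \<Rightarrow> 'k::real_normed_field"
  shows "common_real_root d m n c x \<longleftrightarrow> (\<forall>i<m. \<forall>k<n. jet d n c x i k = 0)"
  by (simp add: common_real_root_def jet_def le_order_iff_coeff_mod_eq_0 monic_poly_of_nonzero)

lemma monic_poly_of_real_root_bound:
  fixes b :: "nat \<Rightarrow> 'k::real_normed_field"
  assumes "poly (monic_poly_of d b) (of_real x) = 0" "1 \<le> d"
  shows "\<bar>x\<bar> \<le> 1 + (\<Sum>j<d. norm (b j))"
proof (cases "\<bar>x\<bar> \<le> 1")
  case True
  then show ?thesis
    using sum_nonneg[of "{..<d}" "\<lambda>j. norm (b j)"] by simp
next
  case False
  let ?a = "of_real x :: 'k"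
  have "?a ^ d = - (\<Sum>j<d. b j * ?a ^ j)"
    using assms(1) by (simp add: monic_poly_of_def poly_sum poly_monom eq_neg_iff_add_eq_0)
  then have "\<bar>x\<bar> ^ d = norm (\<Sum>j<d. b j * ?a ^ j)"
    by (metis norm_minus_cancel norm_of_real norm_power)
  also have "\<dots> \<le> (\<Sum>j<d. norm (b j) * \<bar>x\<bar> ^ j)"
    by (rule order.trans[OF norm_sum]) (simp add: norm_mult norm_power)
  also have "\<dots> \<le> (\<Sum>j<d. norm (b j) * \<bar>x\<bar> ^ (d - 1))"
    using False by (intro sum_mono mult_left_mono power_increasing) auto
  also have "\<dots> = (\<Sum>j<d. norm (b j)) * \<bar>x\<bar> ^ (d - 1)"
    by (simp add: sum_distrib_right)
  finally have "\<bar>x\<bar> * \<bar>x\<bar> ^ (d - 1) \<le> (\<Sum>j<d. norm (b j)) * \<bar>x\<bar> ^ (d - 1)"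
    using assms(2) by (cases d) auto
  moreover have "x \<noteq> 0"
    using False by auto
  ultimately show ?thesis
    by (simp add: mult_le_cancel_right)
qed

lemma common_real_root_bound:
  fixes c :: "nat \<Rightarrow> nat \<Rightarrow> 'k::real_normed_field"
  assumes "common_real_root d m n c x" "1 \<le> n" "1 \<le> m" "1 \<le> d"
  shows "\<bar>x\<bar> \<le> 1 + (\<Sum>j<d. norm (c 0 j))"
proof (rule monic_poly_of_real_root_bound[OF _ assms(4)])
  have "order (of_real x) (monic_poly_of d (c 0)) \<noteq> 0"
    using assms(1-3) by (auto simp: common_real_root_def)
  then show "poly (monic_poly_of d (c 0)) (of_real x) = 0"
    by (simp add: order_root)
qed

lemma common_real_root_bound_if_close:
  fixes c g :: "nat \<Rightarrow> nat \<Rightarrow> 'k::real_normed_field"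
  assumes "common_real_root d m n c x" "1 \<le> n" "1 \<le> m" "1 \<le> d"
    and close: "\<And>j. j < d \<Longrightarrow> norm (c 0 j - g 0 j) < 1"
  shows "\<bar>x\<bar> \<le> 1 + real d + (\<Sum>j<d. norm (g 0 j))"
proof -
  have "norm (c 0 j) \<le> norm (g 0 j) + 1" if "j < d" for j
    using close[OF that] norm_triangle_ineq2[of "c 0 j" "g 0 j"] by simp
  then have "(\<Sum>j<d. norm (c 0 j)) \<le> (\<Sum>j<d. norm (g 0 j) + 1)"
    by (intro sum_mono) auto
  then show ?thesis
    using common_real_root_bound[OF assms(1-4)] by (simp add: sum.distrib)
qed

lemma Qspace_eq_coeff_space:
  assumes "d < n" "1 \<le> m"
  shows "Qspace d m n = (coeff_space d m :: (nat \<Rightarrow> nat \<Rightarrow> 'k::real_normed_field) set)"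
proof -
  have "\<not> common_real_root d m n (c :: nat \<Rightarrow> nat \<Rightarrow> 'k) x" for c x
  proof
    assume "common_real_root d m n c x"
    then have "n \<le> order (of_real x) (monic_poly_of d (c 0))"
      using assms(2) by (simp add: common_real_root_def)
    also have "\<dots> \<le> degree (monic_poly_of d (c 0))"
      by (rule order_degree[OF monic_poly_of_nonzero])
    also have "\<dots> \<le> d"
      unfolding monic_poly_of_def
      by (intro degree_add_le degree_sum_le) (auto intro: order.trans[OF degree_monom_le])
    finally show False
      using assms(1) by simp
  qed
  then show ?thesis
    by (auto simp: Qspace_eq)
qed

lemma jet_add_low_coeffs:
  assumes "\<And>j. Q i j \<noteq> 0 \<Longrightarrow> j < n" "k < n" "n \<le> d"
  shows "jet d n (\<lambda>i j. c i j + Q i j) x i k = jet d n c x i k + Q i k"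
proof -
  have "(\<Sum>j<d. Q i j * jet_basis n j k x) = (\<Sum>j<d. if j = k then Q i k else 0)"
  proof (rule sum.cong)
    fix j assume "j \<in> {..<d}"
    show "Q i j * jet_basis n j k x = (if j = k then Q i k else 0)"
      using assms(1)[of j] by (cases "j < n") (auto simp: jet_basis_low)
  qed simp
  also have "\<dots> = Q i k"
    using assms(2,3) by simp
  finally show ?thesis
    by (simp add: jet_eq_sum distrib_right sum.distrib)
qed

section \<open>Uniform neighbourhoods of compact families\<close>

lemma jet_basis_bounded:
  obtains M where "0 \<le> M" "\<And>x j k. x \<in> {-R..R} \<Longrightarrow> j < d \<Longrightarrow> k < n \<Longrightarrow>
    norm (jet_basis n j k x :: 'k::real_normed_field) \<le> M"
proof -
  let ?S = "\<lambda>x. \<Sum>j<d. \<Sum>k<n. norm (jet_basis n j k x :: 'k)"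
  have "continuous_on {-R..R} ?S"
    by (intro continuous_intros differentiable_imp_continuous_on
        differentiable_at_imp_differentiable_on jet_basis_differentiable)
  then have "bounded (?S ` {-R..R})"
    by (intro compact_imp_bounded compact_continuous_image compact_Icc)
  then obtain B where B: "\<And>x. x \<in> {-R..R} \<Longrightarrow> norm (?S x) \<le> B"
    unfolding bounded_iff by blast
  show ?thesis
  proof
    show "0 \<le> max 0 B"
      by simp
    fix x j k assume "x \<in> {-R..R}" "j < d" "k < n"
    then have "norm (jet_basis n j k x :: 'k) \<le> ?S x"
      by (intro order.trans[OF member_le_sum[of k] member_le_sum[of j]] sum_nonneg) auto
    also have "\<dots> \<le> B"
      using B[OF \<open>x \<in> {-R..R}\<close>] by simp
    finally show "norm (jet_basis n j k x :: 'k) \<le> max 0 B"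
      by simp
  qed
qed

lemma jet_sum_pos:
  assumes "c \<in> Qspace d m n"
  shows "0 < (\<Sum>i<m. \<Sum>k<n. norm (jet d n c x i k :: 'k::real_normed_field))"
proof -
  have "\<exists>i<m. \<exists>k<n. jet d n c x i k \<noteq> 0"
    using assms by (auto simp: Qspace_eq common_real_root_iff_jet_eq_0)
  then show ?thesis
    by (force intro: sum_pos2 sum_nonneg)
qed

lemma jet_margin:
  fixes g :: "real \<Rightarrow> nat \<Rightarrow> nat \<Rightarrow> 'k::real_normed_field"
  assumes g: "\<And>i j. continuous_on {0..1} (\<lambda>s. g s i j)"
    and gQ: "\<And>s. s \<in> {0..1} \<Longrightarrow> g s \<in> Qspace d m n"
  obtains \<mu> where "0 < \<mu>"
    "\<And>s x. s \<in> {0..1} \<Longrightarrow> x \<in> {-R..R} \<Longrightarrow> \<mu> \<le> (\<Sum>i<m. \<Sum>k<n. norm (jet d n (g s) x i k))"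
proof (cases "R < 0")
  case True
  then show ?thesis
    using that[of 1] by simp
next
  case False
  define K where "K = {0..1::real} \<times> {-R..R}"
  define \<Theta> where "\<Theta> p = (\<Sum>i<m. \<Sum>k<n. norm (jet d n (g (fst p)) (snd p) i k))" for p
  have "continuous_on K \<Theta>"
  proof -
    have "continuous_on K (\<lambda>p. g (fst p) i j)" for i j
      by (rule continuous_on_compose2[OF g continuous_on_fst]) (auto simp: K_def)
    moreover have "continuous_on K (\<lambda>p. jet_basis n j k (snd p) :: 'k)" for j k
      by (intro continuous_on_compose2[OF _ continuous_on_snd] differentiable_imp_continuous_on
          differentiable_at_imp_differentiable_on jet_basis_differentiable) auto
    ultimately show ?thesis
      unfolding \<Theta>_def jet_eq_sum by (intro continuous_intros)
  qed
  moreover have "K \<noteq> {}" "compact K"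
    using False by (auto simp: K_def compact_Times)
  ultimately obtain p0 where p0: "p0 \<in> K" "\<And>p. p \<in> K \<Longrightarrow> \<Theta> p0 \<le> \<Theta> p"
    using continuous_attains_inf[of K \<Theta>] by blast
  have "0 < \<Theta> p0"
    using p0(1) gQ unfolding \<Theta>_def K_def by (auto intro: jet_sum_pos)
  then show ?thesis
  proof (rule that)
    fix s x :: real assume "s \<in> {0..1}" "x \<in> {-R..R}"
    then show "\<Theta> p0 \<le> (\<Sum>i<m. \<Sum>k<n. norm (jet d n (g s) x i k))"
      using p0(2)[of "(s, x)"] by (simp add: K_def \<Theta>_def)
  qed
qed

lemma norm_jet_diff_le:
  fixes c c' :: "nat \<Rightarrow> nat \<Rightarrow> 'k::real_normed_field"
  shows "norm (jet d n c x i k - jet d n c' x i k)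
     \<le> (\<Sum>j<d. norm (c i j - c' i j) * norm (jet_basis n j k x :: 'k))"
proof -
  have "jet d n c x i k - jet d n c' x i k = (\<Sum>j<d. (c i j - c' i j) * jet_basis n j k x)"
    by (simp add: jet_eq_sum left_diff_distrib sum_subtractf)
  also have "norm \<dots> \<le> (\<Sum>j<d. norm ((c i j - c' i j) * jet_basis n j k x))"
    by (rule norm_sum)
  finally show ?thesis
    by (simp add: norm_mult)
qed

lemma jet_sum_le_if_close:
  fixes c g :: "nat \<Rightarrow> nat \<Rightarrow> 'k::real_normed_field"
  assumes "common_real_root d m n c x"
    and close: "\<And>i j. i < m \<Longrightarrow> j < d \<Longrightarrow> norm (c i j - g i j) \<le> \<epsilon>"
    and basis: "\<And>j k. j < d \<Longrightarrow> k < n \<Longrightarrow> norm (jet_basis n j k x :: 'k) \<le> M"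
  shows "(\<Sum>i<m. \<Sum>k<n. norm (jet d n g x i k)) \<le> real m * real n * real d * (\<epsilon> * M)"
proof -
  have "norm (jet d n g x i k) \<le> real d * (\<epsilon> * M)" if "i < m" "k < n" for i k
  proof -
    have "jet d n c x i k = 0"
      using assms(1) that by (simp add: common_real_root_iff_jet_eq_0)
    then have "norm (jet d n g x i k) \<le> (\<Sum>j<d. norm (g i j - c i j) * norm (jet_basis n j k x :: 'k))"
      using norm_jet_diff_le[of d n g x i k c] by simp
    also have "\<dots> \<le> (\<Sum>j<d. \<epsilon> * M)"
      using close that basis order.trans[OF norm_ge_zero close]
      by (intro sum_mono mult_mono) (auto simp: norm_minus_commute)
    finally show ?thesis
      by simp
  qed
  then have "(\<Sum>i<m. \<Sum>k<n. norm (jet d n g x i k)) \<le> (\<Sum>i<m. \<Sum>k<n. real d * (\<epsilon> * M))"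
    by (intro sum_mono) auto
  then show ?thesis
    by simp
qed

lemma Qspace_uniform_nbhd:
  fixes g :: "real \<Rightarrow> nat \<Rightarrow> nat \<Rightarrow> 'k::real_normed_field"
  assumes g: "\<And>i j. continuous_on {0..1} (\<lambda>s. g s i j)"
    and gQ: "\<And>s. s \<in> {0..1} \<Longrightarrow> g s \<in> Qspace d m n"
    and n: "1 \<le> n" and m: "1 \<le> m" and d: "1 \<le> d"
  obtains \<epsilon> where "0 < \<epsilon>"
    "\<And>s c. s \<in> {0..1} \<Longrightarrow> c \<in> coeff_space d m \<Longrightarrow>
       (\<And>i j. i < m \<Longrightarrow> j < d \<Longrightarrow> norm (c i j - g s i j) < \<epsilon>) \<Longrightarrow> c \<in> Qspace d m n"
proof -
  have "bounded ((\<lambda>s. \<Sum>j<d. norm (g s 0 j)) ` {0..1})"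
    by (intro compact_imp_bounded compact_continuous_image compact_Icc continuous_intros g)
  then obtain B where B: "\<And>s. s \<in> {0..1} \<Longrightarrow> (\<Sum>j<d. norm (g s 0 j)) \<le> B"
    unfolding bounded_iff by (metis abs_le_D1 imageI real_norm_def)
  define R where "R = 1 + real d + B"
  obtain M where M: "0 \<le> M" "\<And>x j k. x \<in> {-R..R} \<Longrightarrow> j < d \<Longrightarrow> k < n \<Longrightarrow>
      norm (jet_basis n j k x :: 'k) \<le> M"
    using jet_basis_bounded by blast
  obtain \<mu> where \<mu>: "0 < \<mu>" "\<And>s x. s \<in> {0..1} \<Longrightarrow> x \<in> {-R..R} \<Longrightarrow>
      \<mu> \<le> (\<Sum>i<m. \<Sum>k<n. norm (jet d n (g s) x i k))"
    using jet_margin[OF g gQ] by blast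
  define L where "L = real m * real n * real d * M"
  define \<epsilon> where "\<epsilon> = min 1 (\<mu> / (L + 1))"
  have "0 \<le> L"
    using M(1) by (simp add: L_def)
  then have \<epsilon>: "0 < \<epsilon>" and \<epsilon>L: "\<epsilon> * L < \<mu>"
    using \<mu>(1) order.strict_trans1[OF mult_right_mono[of \<epsilon> "\<mu> / (L + 1)" L]]
    by (auto simp: \<epsilon>_def field_simps)
  show ?thesis
  proof (rule that[OF \<epsilon>], rule ccontr)
    fix s c
    assume s: "s \<in> {0..1}" and "c \<in> coeff_space d m" "c \<notin> Qspace d m n"
      and close: "\<And>i j. i < m \<Longrightarrow> j < d \<Longrightarrow> norm (c i j - g s i j) < \<epsilon>"
    then obtain x where x: "common_real_root d m n c x"
      by (auto simp: Qspace_eq)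
    have "\<bar>x\<bar> \<le> 1 + real d + (\<Sum>j<d. norm (g s 0 j))"
      using close[of 0] m by (intro common_real_root_bound_if_close[OF x n m d]) (auto simp: \<epsilon>_def)
    then have xR: "x \<in> {-R..R}"
      using B[OF s] by (auto simp: R_def)
    have "\<mu> \<le> (\<Sum>i<m. \<Sum>k<n. norm (jet d n (g s) x i k))"
      using \<mu>(2)[OF s xR] .
    also have "\<dots> \<le> \<epsilon> * L"
      using jet_sum_le_if_close[OF x, of "g s" \<epsilon> M] close M(2)[OF xR]
      by (simp add: L_def less_imp_le mult_ac)
    finally show False
      using \<epsilon>L by simp
  qed
qed

lemma Qspace_nbhd:
  fixes a :: "nat \<Rightarrow> nat \<Rightarrow> 'k::real_normed_field"
  assumes "a \<in> Qspace d m n" "1 \<le> n" "1 \<le> m" "1 \<le> d"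
  obtains \<epsilon> where "0 < \<epsilon>" "\<And>c. c \<in> coeff_space d m \<Longrightarrow>
    (\<And>i j. i < m \<Longrightarrow> j < d \<Longrightarrow> norm (c i j - a i j) < \<epsilon>) \<Longrightarrow> c \<in> Qspace d m n"
  using Qspace_uniform_nbhd[of "\<lambda>_. a" d m n] assms by (metis atLeastAtMost_iff continuous_on_const order_refl zero_le_one)

lemma homotopic_loops_linear_pointwise:
  fixes p q :: "real \<Rightarrow> 'a \<Rightarrow> 'b \<Rightarrow> 'k::real_normed_vector"
  assumes p: "\<And>i j. continuous_on {0..1} (\<lambda>s. p s i j)" and q: "\<And>i j. continuous_on {0..1} (\<lambda>s. q s i j)"
    and "p 1 = p 0" "q 1 = q 0"
    and S: "\<And>t s. t \<in> {0..1} \<Longrightarrow> s \<in> {0..1} \<Longrightarrow>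
      (\<lambda>i j. (1 - t) *\<^sub>R p s i j + t *\<^sub>R q s i j) \<in> S"
  shows "homotopic_loops S p q"
  unfolding homotopic_loops
proof (intro exI conjI)
  let ?h = "\<lambda>z::real \<times> real. \<lambda>i j. (1 - fst z) *\<^sub>R p (snd z) i j + fst z *\<^sub>R q (snd z) i j"
  have "continuous_on ({0..1} \<times> {0..1}) (\<lambda>z::real \<times> real. p (snd z) i j)"
    "continuous_on ({0..1} \<times> {0..1}) (\<lambda>z::real \<times> real. q (snd z) i j)" for i j
    by (auto intro: continuous_on_compose2[OF p continuous_on_snd] continuous_on_compose2[OF q continuous_on_snd])
  then show "continuous_on ({0..1} \<times> {0..1}) ?h"
    by (intro continuous_intros)
  show "?h \<in> {0..1} \<times> {0..1} \<rightarrow> S"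
    using S by auto
qed (auto simp: pathfinish_def pathstart_def assms(3,4))

lemma path_component_linear_pointwise:
  fixes a b :: "'a \<Rightarrow> 'b \<Rightarrow> 'k::real_normed_vector"
  assumes "\<And>t. t \<in> {0..1} \<Longrightarrow> (\<lambda>i j. (1 - t) *\<^sub>R a i j + t *\<^sub>R b i j) \<in> S"
  shows "path_component S a b"
  unfolding path_component_def
proof (intro exI conjI)
  let ?g = "\<lambda>t::real. \<lambda>i j. (1 - t) *\<^sub>R a i j + t *\<^sub>R b i j"
  show "path ?g"
    unfolding path_def by (intro continuous_intros)
  show "path_image ?g \<subseteq> S"
    using assms by (auto simp: path_image_def)
qed (simp_all add: pathstart_def pathfinish_def)

lemma path_component_imp_homotopic_constant_loops:
  assumes "path_component S a b"
  shows "homotopic_loops S (\<lambda>_. a) (\<lambda>_. b)"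
proof -
  obtain g where g: "path g" "path_image g \<subseteq> S" "pathstart g = a" "pathfinish g = b"
    using assms unfolding path_component_def by blast
  show ?thesis
    unfolding homotopic_loops
  proof (intro exI conjI)
    show "continuous_on ({0..1} \<times> {0..1}) (\<lambda>z::real \<times> real. g (fst z))"
      using g(1) unfolding path_def by (rule continuous_on_compose2[OF _ continuous_on_fst]) auto
    show "(\<lambda>z. g (fst z)) \<in> {0..1} \<times> {0..1} \<rightarrow> S"
      using g(2) by (auto simp: path_image_def)
  qed (use g(3,4) in \<open>auto simp: pathstart_def pathfinish_def\<close>)
qed

lemma simply_connected_if_contractible_loops:
  assumes "path_connected S"
    and "\<And>p. path p \<Longrightarrow> path_image p \<subseteq> S \<Longrightarrow> pathfinish p = pathstart p \<Longrightarrow>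
           \<exists>a\<in>S. homotopic_loops S p (\<lambda>_. a)"
  shows "simply_connected S"
  unfolding simply_connected_def
proof (intro allI impI, elim conjE)
  fix p q
  assume "path p" "pathfinish p = pathstart p" "path_image p \<subseteq> S"
    and "path q" "pathfinish q = pathstart q" "path_image q \<subseteq> S"
  then obtain a b where "a \<in> S" "homotopic_loops S p (\<lambda>_. a)" "b \<in> S" "homotopic_loops S q (\<lambda>_. b)"
    using assms(2) by meson
  moreover have "homotopic_loops S (\<lambda>_. a) (\<lambda>_. b)"
    using assms(1) \<open>a \<in> S\<close> \<open>b \<in> S\<close>
    by (simp add: path_connected_component path_component_imp_homotopic_constant_loops)
  ultimately show "homotopic_loops S p q"
    by (meson homotopic_loops_sym homotopic_loops_trans)
qed

lemma simply_connected_coeff_space: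
  "simply_connected (coeff_space d m :: (nat \<Rightarrow> nat \<Rightarrow> 'k::real_normed_vector) set)"
proof (rule simply_connected_if_contractible_loops)
  have scale: "(\<lambda>i j. a *\<^sub>R c i j + b *\<^sub>R c' i j) \<in> coeff_space d m"
    if "c \<in> coeff_space d m" "c' \<in> coeff_space d m" for a b and c c' :: "nat \<Rightarrow> nat \<Rightarrow> 'k"
    using that by (simp add: coeff_space_def)
  have zero: "(\<lambda>i j. 0) \<in> coeff_space d m"
    by (simp add: coeff_space_def)
  show "path_connected (coeff_space d m :: (nat \<Rightarrow> nat \<Rightarrow> 'k) set)"
    unfolding path_connected_component
    by (blast intro: path_component_linear_pointwise scale)
  fix p :: "real \<Rightarrow> nat \<Rightarrow> nat \<Rightarrow> 'k"
  assume "path p" "path_image p \<subseteq> coeff_space d m" "pathfinish p = pathstart p"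
  then have "homotopic_loops (coeff_space d m) p (\<lambda>_ i j. 0)"
    by (intro homotopic_loops_linear_pointwise scale zero)
       (auto simp: path_def path_image_def pathfinish_def pathstart_def
             intro: continuous_on_product_then_coordinatewise)
  with zero show "\<exists>a\<in>coeff_space d m. homotopic_loops (coeff_space d m) p (\<lambda>_. a)"
    by blast
qed

lemma polynomial_loop_approx:
  fixes p :: "real \<Rightarrow> nat \<Rightarrow> nat \<Rightarrow> 'k::euclidean_space"
  assumes p: "\<And>i j. continuous_on {0..1} (\<lambda>s. p s i j)" and "p 1 = p 0" "0 < e"
    and pV: "\<And>s. s \<in> {0..1} \<Longrightarrow> p s \<in> coeff_space d m"
  obtains q where "\<And>i j x. (\<lambda>s. q s i j) differentiable (at x)"
    "\<And>i j. continuous_on {0..1} (\<lambda>s. q s i j)" "q 1 = q 0" "\<And>s. q s \<in> coeff_space d m"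
    "\<And>s i j. s \<in> {0..1} \<Longrightarrow> norm (q s i j - p s i j) < e"
proof -
  have "\<exists>g. polynomial_function g \<and> g 0 = p 0 i j \<and> g 1 = p 1 i j \<and>
      (\<forall>s\<in>{0..1}. norm (g s - p s i j) < e)" for i j
  proof -
    have "path (\<lambda>s. p s i j)"
      using p unfolding path_def .
    from path_approx_polynomial_function[OF this \<open>0 < e\<close>] show ?thesis
      by (metis pathfinish_def pathstart_def)
  qed
  then obtain G where G: "\<And>i j. polynomial_function (G i j)" "\<And>i j. G i j 0 = p 0 i j"
      "\<And>i j. G i j 1 = p 1 i j" "\<And>i j s. s \<in> {0..1} \<Longrightarrow> norm (G i j s - p s i j) < e"
    by metis
  define q where "q s = (\<lambda>i j. if i < m \<and> j < d then G i j s else 0)" for s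
  show ?thesis
  proof (rule that)
    show "(\<lambda>s. q s i j) differentiable (at x)" for i j x
      unfolding q_def using differentiable_at_polynomial_function[OF G(1)] by (cases "i < m \<and> j < d") auto
    then show "continuous_on {0..1} (\<lambda>s. q s i j)" for i j
      by (simp add: differentiable_imp_continuous_on differentiable_at_imp_differentiable_on)
    show "q 1 = q 0"
      using G(2,3) \<open>p 1 = p 0\<close> by (auto simp: q_def fun_eq_iff)
    show "q s \<in> coeff_space d m" for s
      by (auto simp: q_def coeff_space_def)
    show "norm (q s i j - p s i j) < e" if "s \<in> {0..1}" for s i j
      using G(4)[OF that] pV[OF that] \<open>0 < e\<close> by (auto simp: q_def coeff_space_def)
  qed
qed

lemma homotopic_loops_if_uniformly_close:
  fixes p q :: "real \<Rightarrow> nat \<Rightarrow> nat \<Rightarrow> 'k::real_normed_field"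
  assumes p: "\<And>i j. continuous_on {0..1} (\<lambda>s. p s i j)" and q: "\<And>i j. continuous_on {0..1} (\<lambda>s. q s i j)"
    and "p 1 = p 0" "q 1 = q 0"
    and pV: "\<And>s. s \<in> {0..1} \<Longrightarrow> p s \<in> coeff_space d m" and qV: "\<And>s. q s \<in> coeff_space d m"
    and near: "\<And>s c. s \<in> {0..1} \<Longrightarrow> c \<in> coeff_space d m \<Longrightarrow>
      (\<And>i j. i < m \<Longrightarrow> j < d \<Longrightarrow> norm (c i j - p s i j) < \<epsilon>) \<Longrightarrow> c \<in> Qspace d m n"
    and close: "\<And>s i j. s \<in> {0..1} \<Longrightarrow> norm (q s i j - p s i j) < \<epsilon>"
  shows "homotopic_loops (Qspace d m n) p q"
proof (rule homotopic_loops_linear_pointwise[OF p q assms(3,4)])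
  fix t s :: real assume t: "t \<in> {0..1}" and s: "s \<in> {0..1}"
  show "(\<lambda>i j. (1 - t) *\<^sub>R p s i j + t *\<^sub>R q s i j) \<in> Qspace d m n"
  proof (rule near[OF s])
    show "(\<lambda>i j. (1 - t) *\<^sub>R p s i j + t *\<^sub>R q s i j) \<in> coeff_space d m"
      using pV[OF s] qV[of s] by (simp add: coeff_space_def)
    fix i j
    have "(1 - t) *\<^sub>R p s i j + t *\<^sub>R q s i j - p s i j = t *\<^sub>R (q s i j - p s i j)"
      by (simp add: algebra_simps)
    moreover have "norm (t *\<^sub>R (q s i j - p s i j)) \<le> norm (q s i j - p s i j)"
      using t by (simp add: mult_left_le_one_le)
    ultimately show "norm ((1 - t) *\<^sub>R p s i j + t *\<^sub>R q s i j - p s i j) < \<epsilon>"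
      using close[OF s, of i j] by simp
  qed
qed

section \<open>Generic perturbation of the low-degree coefficients\<close>

text \<open>\<open>P r\<close> changes only coefficients of degree \<open>< n\<close>, which enter every \<open>(n-1)\<close>-jet with
  coefficient \<open>1\<close>, and \<open>\<pi>\<close> reads \<open>r\<close> back off these jets. As \<open>r\<close> ranges over more than three real
  dimensions, a generic \<open>r\<close> misses the image of the three-dimensional set of (parameter, root) pairs
  of a smooth two-parameter family.\<close>

locale jet_perturbation =
  fixes d m n :: nat
    and P :: "'e::euclidean_space \<Rightarrow> nat \<Rightarrow> nat \<Rightarrow> 'k::{real_normed_field, euclidean_space}"
    and \<pi> :: "(nat \<Rightarrow> nat \<Rightarrow> 'k) \<Rightarrow> 'e"
  assumes dim: "3 < DIM('e)"
    and \<pi>_P: "\<And>r. \<pi> (P r) = r"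
    and P_support: "\<And>r i j. P r i j \<noteq> 0 \<Longrightarrow> i < m \<and> j < n"
    and \<pi>_local: "\<And>M M'. (\<And>i k. i < m \<Longrightarrow> k < n \<Longrightarrow> M i k = M' i k) \<Longrightarrow> \<pi> M = \<pi> M'"
    and \<pi>_differentiable: "\<And>(F :: (real \<times> real) \<times> real \<Rightarrow> nat \<Rightarrow> nat \<Rightarrow> 'k) w0.
        (\<And>i k. (\<lambda>w. F w i k) differentiable (at w0)) \<Longrightarrow> (\<lambda>w. \<pi> (F w)) differentiable (at w0)"
    and norm_P_le: "\<And>r i j. norm (P r i j) \<le> norm r"
    and n_le_d: "n \<le> d" and n: "1 \<le> n" and m: "1 \<le> m"
begin

lemma one_le_d: "1 \<le> d"
  using n n_le_d by simp

lemma shift_in_coeff_space: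
  "c \<in> coeff_space d m \<Longrightarrow> (\<lambda>i j. c i j + t *\<^sub>R P r i j) \<in> coeff_space d m"
  using P_support[of r] n_le_d unfolding coeff_space_def by fastforce

lemma perturbation_avoids_common_roots:
  fixes H :: "real \<times> real \<Rightarrow> nat \<Rightarrow> nat \<Rightarrow> 'k"
  assumes H: "\<And>i j u0. (\<lambda>u. H u i j) differentiable (at u0)" and HV: "\<And>u. H u \<in> coeff_space d m"
    and "0 < e"
  obtains r where "norm r < e" "\<And>u. (\<lambda>i j. H u i j + P r i j) \<in> Qspace d m n"
proof -
  \<comment> \<open>\<open>\<Psi> (u, x)\<close> is the only \<open>r\<close> for which \<open>H u + P r\<close> has a common root at \<open>x\<close>.\<close>
  define \<Psi> where "\<Psi> w = \<pi> (\<lambda>i k. - jet d n (H (fst w)) (snd w) i k)" for w :: "(real \<times> real) \<times> real"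
  have "\<Psi> differentiable (at w0)" for w0
    unfolding \<Psi>_def jet_eq_sum
  proof (rule \<pi>_differentiable)
    fix i k
    have "(\<lambda>w. jet_basis n j k (snd w) :: 'k) differentiable (at w0)" for j
      by (rule differentiable_compose[OF jet_basis_differentiable bounded_linear_imp_differentiable[OF bounded_linear_snd]])
    moreover have "(\<lambda>w. H (fst w) i j) differentiable (at w0)" for j
      by (rule differentiable_compose[OF H bounded_linear_imp_differentiable[OF bounded_linear_fst]])
    ultimately show "(\<lambda>w. - (jet_basis n d k (snd w) +
        (\<Sum>j<d. H (fst w) i j * jet_basis n j k (snd w)))) differentiable (at w0)"
      by (intro differentiable_minus differentiable_add differentiable_sum differentiable_mult) auto
  qed
  then have "negligible (range \<Psi>)"
    using dim by (intro negligible_differentiable_image_lowdim differentiable_at_imp_differentiable_on) auto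
  then have "\<not> ball 0 e \<subseteq> range \<Psi>"
    using open_not_negligible[of "ball (0::'e) e"] \<open>0 < e\<close> negligible_subset by auto
  then obtain r where r: "norm r < e" "r \<notin> range \<Psi>"
    by (metis dist_0_norm mem_ball subsetI)
  show ?thesis
  proof (rule that[OF r(1)])
    fix u
    have "\<not> common_real_root d m n (\<lambda>i j. H u i j + P r i j) x" for x
    proof
      assume "common_real_root d m n (\<lambda>i j. H u i j + P r i j) x"
      then have "P r i k = - jet d n (H u) x i k" if "i < m" "k < n" for i k
        using that jet_add_low_coeffs[of "P r" i n k d "H u" x] P_support n_le_d
        by (auto simp: common_real_root_iff_jet_eq_0 add_eq_0_iff)
      then have "r = \<Psi> (u, x)"
        unfolding \<Psi>_def using \<pi>_P \<pi>_local by (metis fst_conv snd_conv)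
      with r(2) show False
        by blast
    qed
    moreover have "(\<lambda>i j. H u i j + P r i j) \<in> coeff_space d m"
      using shift_in_coeff_space[OF HV, where t = 1] by simp
    ultimately show "(\<lambda>i j. H u i j + P r i j) \<in> Qspace d m n"
      by (simp add: Qspace_eq)
  qed
qed

lemma small_shift_in_Qspace:
  assumes "c \<in> coeff_space d m" "norm r < e" "t \<in> {0..1}"
    and near: "\<And>c'. c' \<in> coeff_space d m \<Longrightarrow>
      (\<And>i j. i < m \<Longrightarrow> j < d \<Longrightarrow> norm (c' i j - c i j) < e) \<Longrightarrow> c' \<in> Qspace d m n"
  shows "(\<lambda>i j. c i j + t *\<^sub>R P r i j) \<in> Qspace d m n"
proof (rule near[OF shift_in_coeff_space[OF assms(1)]])
  have "norm (t *\<^sub>R P r i j) \<le> norm r" for i j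
    using assms(3) norm_P_le[of r i j] by (auto intro: order.trans[OF mult_left_le_one_le])
  then show "norm (c i j + t *\<^sub>R P r i j - c i j) < e" for i j
    using assms(2) by (metis add_diff_cancel_left' le_less_trans)
qed

lemma path_connected_Qspace: "path_connected (Qspace d m n :: (nat \<Rightarrow> nat \<Rightarrow> 'k) set)"
  unfolding path_connected_component
proof (intro ballI)
  fix a b :: "nat \<Rightarrow> nat \<Rightarrow> 'k" assume a: "a \<in> Qspace d m n" and b: "b \<in> Qspace d m n"
  obtain ea where "0 < ea" and near_a: "\<And>c. c \<in> coeff_space d m \<Longrightarrow>
      (\<And>i j. i < m \<Longrightarrow> j < d \<Longrightarrow> norm (c i j - a i j) < ea) \<Longrightarrow> c \<in> Qspace d m n"
    using Qspace_nbhd[OF a n m one_le_d] by blast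
  obtain eb where "0 < eb" and near_b: "\<And>c. c \<in> coeff_space d m \<Longrightarrow>
      (\<And>i j. i < m \<Longrightarrow> j < d \<Longrightarrow> norm (c i j - b i j) < eb) \<Longrightarrow> c \<in> Qspace d m n"
    using Qspace_nbhd[OF b n m one_le_d] by blast
  have aV: "a \<in> coeff_space d m" and bV: "b \<in> coeff_space d m"
    using a b by (auto simp: Qspace_eq)
  define H where "H u = (\<lambda>i j. (1 - fst u) *\<^sub>R a i j + fst u *\<^sub>R b i j)" for u :: "real \<times> real"
  obtain r where r: "norm r < min ea eb" and Hr: "\<And>u. (\<lambda>i j. H u i j + P r i j) \<in> Qspace d m n"
  proof (rule perturbation_avoids_common_roots[where e = "min ea eb"])
    show "(\<lambda>u. H u i j) differentiable (at u0)" for i j u0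
      unfolding H_def
      by (intro differentiable_add differentiable_scaleR differentiable_diff differentiable_const
          bounded_linear_imp_differentiable[OF bounded_linear_fst])
    show "H u \<in> coeff_space d m" for u
      using aV bV by (simp add: H_def coeff_space_def)
  qed (use \<open>0 < ea\<close> \<open>0 < eb\<close> in auto)
  note path_component_trans[trans]
  have "path_component (Qspace d m n) a (\<lambda>i j. a i j + P r i j)"
  proof (rule path_component_linear_pointwise)
    fix t :: real assume "t \<in> {0..1}"
    then have "(\<lambda>i j. a i j + t *\<^sub>R P r i j) \<in> Qspace d m n"
      using r by (intro small_shift_in_Qspace[where e = ea, OF aV _ _ near_a]) auto
    then show "(\<lambda>i j. (1 - t) *\<^sub>R a i j + t *\<^sub>R (a i j + P r i j)) \<in> Qspace d m n"
      by (simp add: algebra_simps)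
  qed
  also have "path_component (Qspace d m n) \<dots> (\<lambda>i j. b i j + P r i j)"
  proof (rule path_component_linear_pointwise)
    fix t :: real
    show "(\<lambda>i j. (1 - t) *\<^sub>R (a i j + P r i j) + t *\<^sub>R (b i j + P r i j)) \<in> Qspace d m n"
      using Hr[of "(t, 0)"] by (simp add: H_def algebra_simps)
  qed
  also have "path_component (Qspace d m n) \<dots> b"
  proof (rule path_component_linear_pointwise)
    fix t :: real assume "t \<in> {0..1}"
    then have "(\<lambda>i j. b i j + (1 - t) *\<^sub>R P r i j) \<in> Qspace d m n"
      using r by (intro small_shift_in_Qspace[where e = eb, OF bV _ _ near_b]) auto
    then show "(\<lambda>i j. (1 - t) *\<^sub>R (b i j + P r i j) + t *\<^sub>R b i j) \<in> Qspace d m n"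
      by (simp add: algebra_simps)
  qed
  finally show "path_component (Qspace d m n) a b" .
qed

lemma perturbed_differentiable_loop_contractible:
  fixes q :: "real \<Rightarrow> nat \<Rightarrow> nat \<Rightarrow> 'k"
  assumes q: "\<And>i j x. (\<lambda>s. q s i j) differentiable (at x)" "q 1 = q 0" "\<And>s. q s \<in> coeff_space d m"
    and "0 < e"
  obtains r where "norm r < e" "P r \<in> Qspace d m n"
    "homotopic_loops (Qspace d m n) (\<lambda>s i j. q s i j + P r i j) (\<lambda>_. P r)"
proof -
  define H where "H u = (\<lambda>i j. (1 - snd u) *\<^sub>R q (fst u) i j)" for u :: "real \<times> real"
  obtain r where "norm r < e" and Hr: "\<And>u. (\<lambda>i j. H u i j + P r i j) \<in> Qspace d m n"
  proof (rule perturbation_avoids_common_roots[OF _ _ \<open>0 < e\<close>])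
    show "(\<lambda>u. H u i j) differentiable (at u0)" for i j u0
      unfolding H_def
      by (intro differentiable_scaleR differentiable_diff differentiable_const
          differentiable_compose[OF q(1)] bounded_linear_imp_differentiable
          bounded_linear_fst bounded_linear_snd)
    show "H u \<in> coeff_space d m" for u
      using q(3)[of "fst u"] by (simp add: H_def coeff_space_def)
  qed blast
  moreover have "P r \<in> Qspace d m n"
    using Hr[of "(0, 1)"] by (simp add: H_def)
  moreover have "homotopic_loops (Qspace d m n) (\<lambda>s i j. q s i j + P r i j) (\<lambda>_. P r)"
  proof (rule homotopic_loops_linear_pointwise)
    show "continuous_on {0..1} (\<lambda>s. q s i j + P r i j)" for i j
      by (intro continuous_intros differentiable_imp_continuous_on
          differentiable_at_imp_differentiable_on q(1))
    fix t s :: real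
    show "(\<lambda>i j. (1 - t) *\<^sub>R (q s i j + P r i j) + t *\<^sub>R P r i j) \<in> Qspace d m n"
      using Hr[of "(s, t)"] by (simp add: H_def algebra_simps)
  qed (simp_all add: q(2))
  ultimately show ?thesis
    using that by blast
qed

lemma loop_contractible_in_Qspace:
  fixes p :: "real \<Rightarrow> nat \<Rightarrow> nat \<Rightarrow> 'k"
  assumes "path p" "pathfinish p = pathstart p" "path_image p \<subseteq> Qspace d m n"
  shows "\<exists>a\<in>Qspace d m n. homotopic_loops (Qspace d m n) p (\<lambda>_. a)"
proof -
  have p: "continuous_on {0..1} (\<lambda>s. p s i j)" for i j
    using continuous_on_product_then_coordinatewise[OF
        continuous_on_product_then_coordinatewise[OF assms(1)[unfolded path_def], of i], of j] .
  have pQ: "p s \<in> Qspace d m n" if "s \<in> {0..1}" for s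
    using assms(3) that by (auto simp: path_image_def)
  then have pV: "p s \<in> coeff_space d m" if "s \<in> {0..1}" for s
    using that by (simp add: Qspace_eq)
  have p10: "p 1 = p 0"
    using assms(2) by (simp add: pathfinish_def pathstart_def)
  obtain \<epsilon> where "0 < \<epsilon>" and near: "\<And>s c. s \<in> {0..1} \<Longrightarrow> c \<in> coeff_space d m \<Longrightarrow>
      (\<And>i j. i < m \<Longrightarrow> j < d \<Longrightarrow> norm (c i j - p s i j) < \<epsilon>) \<Longrightarrow> c \<in> Qspace d m n"
    using Qspace_uniform_nbhd[OF p pQ n m one_le_d] by blast
  then have "0 < \<epsilon> / 2"
    by simp
  obtain q where q: "\<And>i j x. (\<lambda>s. q s i j) differentiable (at x)"
      "\<And>i j. continuous_on {0..1} (\<lambda>s. q s i j)" "q 1 = q 0" "\<And>s. q s \<in> coeff_space d m"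
      and q_close: "\<And>s i j. s \<in> {0..1} \<Longrightarrow> norm (q s i j - p s i j) < \<epsilon> / 2"
    using polynomial_loop_approx[OF p p10 \<open>0 < \<epsilon> / 2\<close> pV] by blast
  obtain r where r: "norm r < \<epsilon> / 2" "P r \<in> Qspace d m n"
    and contract: "homotopic_loops (Qspace d m n) (\<lambda>s i j. q s i j + P r i j) (\<lambda>_. P r)"
    using perturbed_differentiable_loop_contractible[OF q(1,3,4) \<open>0 < \<epsilon> / 2\<close>] by blast
  have "homotopic_loops (Qspace d m n) p (\<lambda>s i j. q s i j + P r i j)"
  proof (rule homotopic_loops_if_uniformly_close[OF p _ p10 _ pV _ near])
    show "continuous_on {0..1} (\<lambda>s. q s i j + P r i j)" for i j
      by (intro continuous_intros q(2))
    show "(\<lambda>i j. q s i j + P r i j) \<in> coeff_space d m" for s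
      using shift_in_coeff_space[OF q(4), where t = 1 and r = r] by simp
    show "norm (q s i j + P r i j - p s i j) < \<epsilon>" if "s \<in> {0..1}" for s i j
      using norm_triangle_ineq[of "q s i j - p s i j" "P r i j"] q_close[OF that, of i j]
        norm_P_le[of r i j] r(1) by (simp add: algebra_simps)
  qed (simp add: q(3))
  with contract r(2) show ?thesis
    by (meson homotopic_loops_trans)
qed

theorem simply_connected_Qspace: "simply_connected (Qspace d m n :: (nat \<Rightarrow> nat \<Rightarrow> 'k) set)"
  by (rule simply_connected_if_contractible_loops[OF path_connected_Qspace loop_contractible_in_Qspace])

end

definition block_pos :: "nat \<Rightarrow> nat \<Rightarrow> nat \<times> nat" where
  "block_pos n l = (l div n, l mod n)"

lemma block_pos_eq_iff [simp]: "block_pos n a = block_pos n b \<longleftrightarrow> a = b"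
  unfolding block_pos_def by (metis div_mult_mod_eq prod.inject)

lemma block_pos_less:
  assumes "l < m * n"
  shows "fst (block_pos n l) < m" "snd (block_pos n l) < n"
proof -
  have "0 < n"
    using assms by (cases n) auto
  then show "snd (block_pos n l) < n"
    by (simp add: block_pos_def)
  show "fst (block_pos n l) < m"
    using assms by (simp add: block_pos_def less_mult_imp_div_less)
qed

definition place4 :: "nat \<Rightarrow> real \<times> real \<times> real \<times> real \<Rightarrow> nat \<Rightarrow> nat \<Rightarrow> real" where
  "place4 n r i j =
     (if (i, j) = block_pos n 0 then fst r
      else if (i, j) = block_pos n 1 then fst (snd r)
      else if (i, j) = block_pos n 2 then fst (snd (snd r))
      else if (i, j) = block_pos n 3 then snd (snd (snd r)) else 0)"

definition pick4 :: "nat \<Rightarrow> (nat \<Rightarrow> nat \<Rightarrow> real) \<Rightarrow> real \<times> real \<times> real \<times> real" where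
  "pick4 n M = (case_prod M (block_pos n 0), case_prod M (block_pos n 1),
                case_prod M (block_pos n 2), case_prod M (block_pos n 3))"

definition place2 :: "nat \<Rightarrow> complex \<times> complex \<Rightarrow> nat \<Rightarrow> nat \<Rightarrow> complex" where
  "place2 n r i j =
     (if (i, j) = block_pos n 0 then fst r else if (i, j) = block_pos n 1 then snd r else 0)"

definition pick2 :: "nat \<Rightarrow> (nat \<Rightarrow> nat \<Rightarrow> complex) \<Rightarrow> complex \<times> complex" where
  "pick2 n M = (case_prod M (block_pos n 0), case_prod M (block_pos n 1))"

lemma jet_perturbation_real:
  assumes "4 \<le> m * n" "n \<le> d" "1 \<le> n" "1 \<le> m"
  shows "jet_perturbation d m n (place4 n) (pick4 n)"
proof
  have pos: "fst (block_pos n l) < m" "snd (block_pos n l) < n" if "l < 4" for l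
    using block_pos_less[of l m n] that assms(1) by auto
  show "pick4 n (place4 n r) = r" for r
    by (simp add: pick4_def place4_def case_prod_beta)
  show "place4 n r i j \<noteq> 0 \<Longrightarrow> i < m \<and> j < n" for r i j
    using pos[of 0] pos[of 1] pos[of 2] pos[of 3]
    by (auto simp: place4_def prod_eq_iff split: if_splits)
  show "pick4 n M = pick4 n M'" if "\<And>i k. i < m \<Longrightarrow> k < n \<Longrightarrow> M i k = M' i k" for M M'
    using that pos[of 0] pos[of 1] pos[of 2] pos[of 3] by (simp add: pick4_def case_prod_beta)
  show "(\<lambda>w. pick4 n (F w)) differentiable (at w0)" if "\<And>i k. (\<lambda>w. F w i k) differentiable (at w0)"
    for F :: "(real \<times> real) \<times> real \<Rightarrow> nat \<Rightarrow> nat \<Rightarrow> real" and w0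
    unfolding pick4_def case_prod_beta by (intro differentiable_Pair that)
  show "norm (place4 n r i j) \<le> norm r" for r i j
  proof -
    obtain a b c e where r: "r = (a, b, c, e)"
      by (metis prod.collapse)
    have "norm a \<le> norm r" "norm b \<le> norm r" "norm c \<le> norm r" "norm e \<le> norm r"
      unfolding r by (metis norm_fst_le norm_snd_le fst_conv snd_conv order.trans)+
    then show ?thesis
      by (simp add: place4_def r del: real_norm_def)
  qed
qed (use assms in auto)

lemma jet_perturbation_complex:
  assumes "2 \<le> m * n" "n \<le> d" "1 \<le> n" "1 \<le> m"
  shows "jet_perturbation d m n (place2 n) (pick2 n)"
proof
  have pos: "fst (block_pos n l) < m" "snd (block_pos n l) < n" if "l < 2" for l
    using block_pos_less[of l m n] that assms(1) by auto
  show "pick2 n (place2 n r) = r" for r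
    by (simp add: pick2_def place2_def case_prod_beta)
  show "place2 n r i j \<noteq> 0 \<Longrightarrow> i < m \<and> j < n" for r i j
    using pos[of 0] pos[of 1] by (auto simp: place2_def prod_eq_iff split: if_splits)
  show "pick2 n M = pick2 n M'" if "\<And>i k. i < m \<Longrightarrow> k < n \<Longrightarrow> M i k = M' i k" for M M'
    using that pos[of 0] pos[of 1] by (simp add: pick2_def case_prod_beta)
  show "(\<lambda>w. pick2 n (F w)) differentiable (at w0)" if "\<And>i k. (\<lambda>w. F w i k) differentiable (at w0)"
    for F :: "(real \<times> real) \<times> real \<Rightarrow> nat \<Rightarrow> nat \<Rightarrow> complex" and w0
    unfolding pick2_def case_prod_beta by (intro differentiable_Pair that)
  show "norm (place2 n r i j) \<le> norm r" for r i j
  proof -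
    have "norm (fst r) \<le> norm r" "norm (snd r) \<le> norm r"
      by (metis norm_fst_le norm_snd_le prod.collapse)+
    then show ?thesis
      by (simp add: place2_def)
  qed
qed (use assms in auto)

theorem lemma6p1:
  fixes d m n :: nat
  assumes "1 \<le> d" and "1 \<le> m" and "1 \<le> n" and "(m, n) \<noteq> (1, 1)"
  shows "(4 \<le> 1 * m * n \<longrightarrow> simply_connected (Qspace d m n :: (nat \<Rightarrow> nat \<Rightarrow> real) set))
       \<and> (4 \<le> 2 * m * n \<longrightarrow> simply_connected (Qspace d m n :: (nat \<Rightarrow> nat \<Rightarrow> complex) set))"
proof (cases "d < n")
  case True
  then show ?thesis
    using Qspace_eq_coeff_space[OF True assms(2)] simply_connected_coeff_space by metis
next
  case False
  then have "n \<le> d"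
    by simp
  show ?thesis
    using jet_perturbation.simply_connected_Qspace[OF jet_perturbation_real]
      jet_perturbation.simply_connected_Qspace[OF jet_perturbation_complex]
      \<open>n \<le> d\<close> assms(2,3) by simp
qed

end
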